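(* Let $X$ be a compact Hausdorff space and let $D$ be a unital separable $C(X)$-algebra all of whose fibres $D_x$ ($x\in X$) are properly infinite. Then there exists an integer $l>0$ such that the matrix algebra $M_l(D)$ is properly infinite.
   Context: A $C(X)$-algebra is a C*-algebra $D$ together with a unital $*$-homomorphism from $C(X)$ (the continuous complex-valued functions on $X$) into the centre of the multiplier algebra $\mathcal{M}(D)$. For $x\in X$, let $C_x(X)=\{f\in C(X): f(x)=0\}$; the fibre $D_x$ is the quotient of $D$ by the closed ideal $C_x(X)D$. A unital C*-algebra is properly infinite if its unit $1$ is a properly infinite projection, i.e. there are mutually orthogonal projections $p_1,p_2$ with $p_1+p_2\le 1$ and each $p_i$ Murray–von Neumann equivalent to $1$ (equivalently, it contains two isometries with orthogonal ranges). *)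

theory Defs
  imports "HOL-Analysis.Analysis"
begin

class cstar_algebra = real_normed_algebra_1 + banach +
  fixes cscale :: "complex \<Rightarrow> 'a \<Rightarrow> 'a"
    and adj :: "'a \<Rightarrow> 'a"
  assumes cscale_of_real: "cscale (complex_of_real r) x = scaleR r x"
    and cscale_add_right: "cscale a (x + y) = cscale a x + cscale a y"
    and cscale_add_left: "cscale (a + b) x = cscale a x + cscale b x"
    and cscale_cscale: "cscale a (cscale b x) = cscale (a * b) x"
    and cscale_mult_left: "cscale a x * y = cscale a (x * y)"
    and cscale_mult_right: "x * cscale a y = cscale a (x * y)"
    and norm_cscale: "norm (cscale a x) = cmod a * norm x"
    and adj_adj: "adj (adj x) = x"
    and adj_add: "adj (x + y) = adj x + adj y"
    and adj_mult: "adj (x * y) = adj y * adj x"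
    and adj_cscale: "adj (cscale a x) = cscale (cnj a) (adj x)"
    and cstar_identity: "norm (adj x * x) = (norm x)^2"

text \<open>C(X)-algebra structure on a unital C*-algebra D (so M(D) = D):
  a unital *-homomorphism from C(X) into the centre of D.\<close>

definition CX_algebra :: "(('x::topological_space \<Rightarrow> complex) \<Rightarrow> 'a::cstar_algebra) \<Rightarrow> bool" where
  "CX_algebra \<phi> \<longleftrightarrow>
     (\<forall>f g. continuous_on UNIV f \<longrightarrow> continuous_on UNIV g \<longrightarrow>
        \<phi> (\<lambda>x. f x + g x) = \<phi> f + \<phi> g \<and> \<phi> (\<lambda>x. f x * g x) = \<phi> f * \<phi> g) \<and>
     (\<forall>c f. continuous_on UNIV f \<longrightarrow> \<phi> (\<lambda>x. c * f x) = cscale c (\<phi> f)) \<and>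
     (\<forall>f. continuous_on UNIV f \<longrightarrow> \<phi> (\<lambda>x. cnj (f x)) = adj (\<phi> f)) \<and>
     \<phi> (\<lambda>x. 1) = 1 \<and>
     (\<forall>f d. continuous_on UNIV f \<longrightarrow> \<phi> f * d = d * \<phi> f)"

definition fibre_ideal :: "(('x::topological_space \<Rightarrow> complex) \<Rightarrow> 'a::cstar_algebra) \<Rightarrow> 'x \<Rightarrow> 'a set" where
  "fibre_ideal \<phi> x = closure (span {\<phi> f * d | f d. continuous_on UNIV f \<and> f x = 0})"

text \<open>The quotient D/I is properly infinite: it contains two isometries with
  orthogonal ranges, i.e. there are lifts s1, s2 in D satisfying the relations modulo I.\<close>

definition properly_infinite_mod :: "'a::cstar_algebra set \<Rightarrow> bool" where
  "properly_infinite_mod I \<longleftrightarrow>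
     (\<exists>s1 s2. adj s1 * s1 - 1 \<in> I \<and> adj s2 * s2 - 1 \<in> I \<and>
              (s1 * adj s1) * (s2 * adj s2) \<in> I)"

text \<open>l x l matrices over D, represented as functions with indices below l.\<close>

definition mat_mult :: "nat \<Rightarrow> (nat \<Rightarrow> nat \<Rightarrow> 'a::cstar_algebra) \<Rightarrow> (nat \<Rightarrow> nat \<Rightarrow> 'a) \<Rightarrow> nat \<Rightarrow> nat \<Rightarrow> 'a" where
  "mat_mult l A B = (\<lambda>i j. \<Sum>k<l. A i k * B k j)"

definition mat_adj :: "(nat \<Rightarrow> nat \<Rightarrow> 'a::cstar_algebra) \<Rightarrow> nat \<Rightarrow> nat \<Rightarrow> 'a" where
  "mat_adj A = (\<lambda>i j. adj (A j i))"

definition mat_one :: "nat \<Rightarrow> nat \<Rightarrow> 'a::cstar_algebra" where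
  "mat_one = (\<lambda>i j. if i = j then 1 else 0)"

definition mat_eq :: "nat \<Rightarrow> (nat \<Rightarrow> nat \<Rightarrow> 'a) \<Rightarrow> (nat \<Rightarrow> nat \<Rightarrow> 'a) \<Rightarrow> bool" where
  "mat_eq l A B \<longleftrightarrow> (\<forall>i<l. \<forall>j<l. A i j = B i j)"

definition mat_properly_infinite :: "'a::cstar_algebra itself \<Rightarrow> nat \<Rightarrow> bool" where
  "mat_properly_infinite T l \<longleftrightarrow>
     (\<exists>S1 S2 :: nat \<Rightarrow> nat \<Rightarrow> 'a.
        mat_eq l (mat_mult l (mat_adj S1) S1) mat_one \<and>
        mat_eq l (mat_mult l (mat_adj S2) S2) mat_one \<and>
        mat_eq l (mat_mult l (mat_mult l S1 (mat_adj S1)) (mat_mult l S2 (mat_adj S2))) (\<lambda>i j. 0))"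

end

theory Submission
  imports Defs "HOL-Computational_Algebra.Formal_Power_Series"
begin

text \<open>Near a point \<open>x\<close>, lifts \<open>s\<^sub>1, s\<^sub>2 \<in> D\<close> of two isometries of \<open>D\<^sub>x\<close> with orthogonal ranges
  satisfy the defining relations up to elements of \<open>C\<^sub>x(X) D\<close>, and these are small after
  multiplication by functions supported near \<open>x\<close>. Multiplying \<open>s\<^sub>1\<close> by \<open>(1 + a)^(-1/2)\<close>
  (binomial series) makes it an exact isometry over a neighbourhood of \<open>x\<close>; one Gram-Schmidt step
  against \<open>s\<^sub>1\<close> and the same normalisation do this for \<open>s\<^sub>2\<close>, now with range orthogonal to that
  of \<open>s\<^sub>1\<close>. Over such a neighbourhood the words \<open>t\<^sub>2\<^sup>m t\<^sub>1\<close> are orthonormal. Take finitely many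
  such neighbourhoods covering \<open>X\<close> and continuous \<open>h\<^sub>j\<close> supported in them with
  \<open>\<Sum> h\<^sub>j\<^sup>2 = 1\<close>; then the vectors \<open>(h\<^sub>j t\<^sub>2\<^sup>m t\<^sub>1)\<^sub>j\<close>, \<open>m < 2n\<close>, are orthonormal in \<open>D\<^sup>n\<close>, and the
  first and last \<open>n\<close> of them are the columns of two isometries in \<open>M\<^sub>n(D)\<close> with orthogonal
  ranges.\<close>

lemma adj_zero [simp]: "adj 0 = (0::'a::cstar_algebra)"
  by (metis add_cancel_right_right adj_add)

lemma adj_one [simp]: "adj 1 = (1::'a::cstar_algebra)"
  by (metis adj_adj adj_mult mult.left_neutral)

lemma adj_scaleR: "adj (r *\<^sub>R x) = r *\<^sub>R adj (x::'a::cstar_algebra)"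
  by (metis adj_cscale cscale_of_real complex_cnj_complex_of_real)

lemma adj_uminus: "adj (- x) = - adj (x::'a::cstar_algebra)"
  using adj_scaleR[of "-1" x] by simp

lemma adj_diff: "adj (x - y) = adj x - adj (y::'a::cstar_algebra)"
  by (metis adj_add adj_uminus diff_conv_add_uminus)

lemma adj_power: "adj (x ^ n) = adj (x::'a::cstar_algebra) ^ n"
  by (induction n) (auto simp: adj_mult power_commutes)

lemma norm_adj [simp]: "norm (adj x) = norm (x::'a::cstar_algebra)"
proof -
  have le: "norm y \<le> norm (adj y)" for y :: 'a
  proof (cases "y = 0")
    case False
    have "norm y ^ 2 \<le> norm (adj y) * norm y"
      using cstar_identity[of y] norm_mult_ineq[of "adj y" y] by simp
    with False show ?thesis by (simp add: power2_eq_square)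
  qed simp
  show ?thesis using le[of x] le[of "adj x"] by (simp add: adj_adj)
qed

lemma bounded_linear_adj: "bounded_linear (adj :: 'a::cstar_algebra \<Rightarrow> 'a)"
  by (rule bounded_linear_intro[where K=1]) (auto simp: adj_add adj_scaleR)

lemma norm_mult_le:
  fixes x y :: "'a::real_normed_algebra"
  shows "norm x \<le> r \<Longrightarrow> norm y \<le> s \<Longrightarrow> norm (x * y) \<le> r * s"
  by (meson mult_mono norm_ge_zero norm_mult_ineq order_trans)

lemma central_left_commute:
  fixes P :: "'a::semigroup_mult"
  assumes "\<And>z. P * z = z * P"
  shows "P * (a * b) = a * (P * b)"
  by (metis assms mult.assoc)

section \<open>Inverse square roots\<close>

lemma abs_gbinomial_minus_half_le_one: "\<bar>(-1/2::real) gchoose k\<bar> \<le> 1"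
proof (induction k)
  case (Suc k)
  have "(-1/2::real) gchoose Suc k = ((-1/2 - of_nat k) / of_nat (Suc k)) * ((-1/2) gchoose k)"
    using gbinomial_mult_1[of "-1/2::real" k] by (simp add: field_simps del: of_nat_Suc)
  moreover have "\<bar>(-1/2 - of_nat k) / of_nat (Suc k)\<bar> \<le> (1::real)"
    by (simp add: divide_simps)
  ultimately show ?case
    by (metis Suc.IH abs_mult mult_le_one abs_ge_zero)
qed simp

lemma gbinomial_minus_half_convolution:
  "(\<Sum>i\<le>k. ((-1/2::real) gchoose i) * ((-1/2) gchoose (k - i))) = (-1) ^ k"
proof -
  have "(\<Sum>i\<le>k. ((-1/2::real) gchoose i) * ((-1/2) gchoose (k - i))) = (-1::real) gchoose k"
    using gbinomial_Vandermonde[of "-1/2::real" "-1/2" k] by (simp add: atLeast0AtMost)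
  also have "\<dots> = (-1) ^ k"
    using gbinomial_minus[of "1::real" k] binomial_gbinomial[of k k, where 'a=real] by simp
  finally show ?thesis .
qed

lemma neumann_series_left_inverse:
  fixes a :: "'a::{real_normed_algebra_1,banach}"
  assumes "norm a < 1"
  shows "(\<Sum>k. (-a) ^ k) * (1 + a) = 1"
proof -
  have "norm ((-a) ^ k) \<le> norm a ^ k" for k
    using norm_power_ineq[of "-a" k] by simp
  then have summable: "summable (\<lambda>k. norm ((-a) ^ k))"
    using assms by (intro summable_comparison_test[OF _ summable_geometric[of "norm a"]]) auto
  then have "(\<lambda>k. (-a) ^ k) \<longlonglongrightarrow> 0"
    by (intro summable_LIMSEQ_zero) (rule summable_norm_cancel)
  then have "(\<lambda>k. (-a) ^ k - (-a) ^ Suc k) sums 1"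
    using telescope_sums'[of "\<lambda>k. (-a) ^ k" 0] by simp
  moreover have "(-a) ^ k - (-a) ^ Suc k = (-a) ^ k * (1 + a)" for k
    by (simp only: power_Suc2) (simp add: algebra_simps)
  moreover have "(\<lambda>k. (-a) ^ k * (1 + a)) sums ((\<Sum>k. (-a) ^ k) * (1 + a))"
    using summable_norm_cancel[OF summable] by (intro sums_mult2 summable_sums)
  ultimately show ?thesis
    using sums_unique2 by force
qed

lemma binomial_inverse_sqrt_series_bound:
  fixes a :: "'a::{real_normed_algebra_1,banach}"
  assumes "norm a \<le> 1/2"
  shows "summable (\<lambda>k. norm (((-1/2::real) gchoose k) *\<^sub>R a ^ k))"
    and "norm (\<Sum>k. ((-1/2::real) gchoose k) *\<^sub>R a ^ k) \<le> 2"
proof -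
  have bound: "norm (((-1/2::real) gchoose k) *\<^sub>R a ^ k) \<le> (1/2) ^ k" for k
  proof -
    have "norm (((-1/2::real) gchoose k) *\<^sub>R a ^ k) \<le> 1 * norm a ^ k"
      unfolding norm_scaleR by (intro mult_mono abs_gbinomial_minus_half_le_one norm_power_ineq) auto
    also have "\<dots> \<le> (1/2) ^ k"
      using assms by (simp add: power_mono)
    finally show ?thesis .
  qed
  show summable: "summable (\<lambda>k. norm (((-1/2::real) gchoose k) *\<^sub>R a ^ k))"
    by (rule summable_comparison_test[OF _ summable_geometric[of "1/2::real"]]) (use bound in auto)
  have "norm (\<Sum>k. ((-1/2::real) gchoose k) *\<^sub>R a ^ k) \<le> (\<Sum>k. norm (((-1/2::real) gchoose k) *\<^sub>R a ^ k))"
    by (rule summable_norm[OF summable])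
  also have "\<dots> \<le> (\<Sum>k. (1/2::real) ^ k)"
    by (rule suminf_le[OF bound summable summable_geometric]) simp
  also have "\<dots> = 2"
    using suminf_geometric[of "1/2::real"] by simp
  finally show "norm (\<Sum>k. ((-1/2::real) gchoose k) *\<^sub>R a ^ k) \<le> 2" .
qed

lemma binomial_inverse_sqrt_series_square:
  fixes a :: "'a::{real_normed_algebra_1,banach}"
  assumes "norm a \<le> 1/2"
  defines "r \<equiv> \<Sum>k. ((-1/2::real) gchoose k) *\<^sub>R a ^ k"
  shows "r * r * (1 + a) = 1"
proof -
  define f where "f k = ((-1/2::real) gchoose k) *\<^sub>R a ^ k" for k
  have convolution: "(\<Sum>i\<le>k. f i * f (k - i)) = (-a) ^ k" for k
  proof -
    have "(\<Sum>i\<le>k. f i * f (k - i))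
        = (\<Sum>i\<le>k. ((-1/2::real) gchoose i) * ((-1/2) gchoose (k - i))) *\<^sub>R a ^ k"
      unfolding scaleR_sum_left by (rule sum.cong) (auto simp: f_def power_add[symmetric])
    also have "\<dots> = (-1) ^ k *\<^sub>R a ^ k"
      by (simp only: gbinomial_minus_half_convolution)
    also have "\<dots> = (-a) ^ k"
      by (simp add: power_minus[of a] scaleR_conv_of_real)
    finally show ?thesis .
  qed
  have summable: "summable (\<lambda>k. norm (f k))"
    unfolding f_def by (rule binomial_inverse_sqrt_series_bound(1)[OF assms(1)])
  have "(\<lambda>k. (-a) ^ k) sums ((\<Sum>k. f k) * (\<Sum>k. f k))"
    using Cauchy_product_sums[OF summable summable] by (simp only: convolution)
  then have "r * r = (\<Sum>k. (-a) ^ k)"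
    by (simp add: r_def f_def sums_iff)
  moreover have "norm a < 1"
    using assms(1) by simp
  ultimately show ?thesis
    using neumann_series_left_inverse by metis
qed

lemma selfadjoint_inverse_sqrt:
  fixes a :: "'a::cstar_algebra"
  assumes selfadjoint: "adj a = a" and small: "norm a \<le> 1/2"
  obtains r where "adj r = r" "norm r \<le> 2" "r * (1 + a) * r = 1"
proof -
  define f where "f k = ((-1/2::real) gchoose k) *\<^sub>R a ^ k" for k
  define r where "r = (\<Sum>k. f k)"
  have f_sums: "f sums r"
    using summable_norm_cancel[OF binomial_inverse_sqrt_series_bound(1)[OF small]]
    unfolding r_def f_def by (rule summable_sums)
  have "adj (f k) = f k" for k
    by (simp add: f_def adj_scaleR adj_power selfadjoint)
  then have "f sums adj r"
    using bounded_linear.sums[OF bounded_linear_adj f_sums] by simp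
  then have "adj r = r"
    using f_sums sums_unique2 by blast
  have "f k * a = a * f k" for k
    unfolding f_def by (simp only: mult_scaleR_left mult_scaleR_right power_commutes)
  then have "(\<lambda>k. a * f k) sums (r * a)"
    using sums_mult2[OF f_sums, of a] by simp
  then have "r * a = a * r"
    using sums_unique2 sums_mult[OF f_sums, of a] by blast
  then have "r * (1 + a) * r = r * r * (1 + a)"
    by (simp add: distrib_left distrib_right mult.assoc flip: \<open>r * a = a * r\<close>)
  also have "\<dots> = 1"
    using binomial_inverse_sqrt_series_square[OF small] by (simp add: r_def f_def)
  finally show ?thesis
    using that \<open>adj r = r\<close> binomial_inverse_sqrt_series_bound(2)[OF small] by (simp add: r_def f_def)
qed

section \<open>Contractivity of the structure map\<close>

context
  fixes \<phi> :: "('x::topological_space \<Rightarrow> complex) \<Rightarrow> 'a::cstar_algebra"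
  assumes cx: "CX_algebra \<phi>"
begin

lemma cx_add: "continuous_on UNIV f \<Longrightarrow> continuous_on UNIV g \<Longrightarrow> \<phi> (\<lambda>x. f x + g x) = \<phi> f + \<phi> g"
  using cx unfolding CX_algebra_def by blast

lemma cx_mult: "continuous_on UNIV f \<Longrightarrow> continuous_on UNIV g \<Longrightarrow> \<phi> (\<lambda>x. f x * g x) = \<phi> f * \<phi> g"
  using cx unfolding CX_algebra_def by blast

lemma cx_scale: "continuous_on UNIV f \<Longrightarrow> \<phi> (\<lambda>x. c * f x) = cscale c (\<phi> f)"
  using cx unfolding CX_algebra_def by blast

lemma cx_adj: "continuous_on UNIV f \<Longrightarrow> \<phi> (\<lambda>x. cnj (f x)) = adj (\<phi> f)"
  using cx unfolding CX_algebra_def by blast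

lemma cx_one: "\<phi> (\<lambda>x. 1) = 1"
  using cx unfolding CX_algebra_def by blast

lemma cx_central: "continuous_on UNIV f \<Longrightarrow> \<phi> f * d = d * \<phi> f"
  using cx unfolding CX_algebra_def by blast

lemma cx_zero: "\<phi> (\<lambda>x. 0) = 0"
  using cx_add[of "\<lambda>x. 0" "\<lambda>x. 0"] by simp

lemma cx_of_real_selfadjoint: "continuous_on UNIV g \<Longrightarrow> adj (\<phi> (\<lambda>x. of_real (g x))) = \<phi> (\<lambda>x. of_real (g x))"
  using cx_adj[of "\<lambda>x. of_real (g x)"] by (simp add: continuous_on_of_real)

lemma cx_sum:
  fixes n :: nat
  shows "(\<And>i. i < n \<Longrightarrow> continuous_on UNIV (f i)) \<Longrightarrow> \<phi> (\<lambda>x. \<Sum>i<n. f i x) = (\<Sum>i<n. \<phi> (f i))"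
proof (induction n)
  case (Suc n)
  have "continuous_on UNIV (\<lambda>x. \<Sum>i<n. f i x)"
    using Suc.prems by (intro continuous_intros) auto
  then have "\<phi> (\<lambda>x. \<Sum>i<Suc n. f i x) = \<phi> (\<lambda>x. \<Sum>i<n. f i x) + \<phi> (f n)"
    using cx_add[of "\<lambda>x. \<Sum>i<n. f i x" "f n"] Suc.prems by simp
  then show ?case
    using Suc by simp
qed (simp add: cx_zero)

lemma cx_sum_squares:
  fixes h :: "nat \<Rightarrow> 'x \<Rightarrow> real"
  assumes "\<And>j. continuous_on UNIV (h j)" and "\<And>x. (\<Sum>j<n. (h j x)\<^sup>2) = 1"
  shows "(\<Sum>j<n. \<phi> (\<lambda>x. of_real (h j x)) * \<phi> (\<lambda>x. of_real (h j x))) = 1"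
proof -
  have continuous: "continuous_on UNIV (\<lambda>x. complex_of_real (h j x))" for j
    using assms(1) by (rule continuous_on_of_real)
  have "(\<Sum>j<n. \<phi> (\<lambda>x. of_real (h j x)) * \<phi> (\<lambda>x. of_real (h j x)))
      = (\<Sum>j<n. \<phi> (\<lambda>x. of_real ((h j x)\<^sup>2)))"
    using cx_mult[OF continuous continuous] by (simp add: power2_eq_square)
  also have "\<dots> = \<phi> (\<lambda>x. \<Sum>j<n. of_real ((h j x)\<^sup>2))"
    by (rule cx_sum[symmetric, of n "\<lambda>j x. of_real ((h j x)\<^sup>2)"])
       (intro continuous_intros assms(1))
  also have "\<dots> = \<phi> (\<lambda>x. 1)"
    by (simp only: of_real_sum[symmetric] assms(2) of_real_1)
  finally show ?thesis
    by (simp only: cx_one)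
qed

lemma norm_cx_unitary:
  assumes "continuous_on UNIV u" and "\<And>x. cnj (u x) * u x = 1"
  shows "norm (\<phi> u) = 1"
proof -
  have "adj (\<phi> u) * \<phi> u = 1"
    using cx_mult[of "\<lambda>x. cnj (u x)" u] cx_adj[of u] assms cx_one by simp
  then have "(norm (\<phi> u))\<^sup>2 = 1"
    using cstar_identity[of "\<phi> u"] by simp
  then show ?thesis
    by (simp add: power2_eq_1_iff) (smt (verit) norm_ge_zero)
qed

text \<open>A real function with values in \<open>[-1, 1]\<close> is the mean of the unitary-valued functions
  \<open>g \<plusminus> \<i> sqrt (1 - g\<^sup>2)\<close>, which \<open>\<phi>\<close> maps to unitaries.\<close>

lemma norm_cx_of_real_le_one:
  assumes g: "continuous_on UNIV g" and bound: "\<And>x. \<bar>g x\<bar> \<le> 1"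
  shows "norm (\<phi> (\<lambda>x. of_real (g x))) \<le> 1"
proof -
  define u where "u x = complex_of_real (g x) + \<i> * complex_of_real (sqrt (1 - (g x)\<^sup>2))" for x
  have u: "continuous_on UNIV u"
    unfolding u_def by (intro continuous_intros g)
  have "cnj (u x) * u x = 1" for x
  proof -
    have "(sqrt (1 - (g x)\<^sup>2))\<^sup>2 = 1 - (g x)\<^sup>2"
      using bound[of x] by (simp add: abs_square_le_1)
    then show ?thesis
      by (simp add: u_def complex_eq_iff power2_eq_square)
  qed
  then have "norm (\<phi> u) = 1"
    by (rule norm_cx_unitary[OF u])
  have "\<phi> (\<lambda>x. of_real (g x)) = \<phi> (\<lambda>x. (1/2) * (u x + cnj (u x)))"
    by (rule arg_cong[where f=\<phi>]) (auto simp: u_def complex_eq_iff)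
  also have "\<dots> = cscale (1/2) (\<phi> (\<lambda>x. u x + cnj (u x)))"
    by (intro cx_scale continuous_intros u)
  also have "\<dots> = cscale (1/2) (\<phi> u + adj (\<phi> u))"
    using cx_add[of u "\<lambda>x. cnj (u x)"] cx_adj[OF u] u by simp
  finally have "norm (\<phi> (\<lambda>x. of_real (g x))) = 1/2 * norm (\<phi> u + adj (\<phi> u))"
    by (simp add: norm_cscale)
  also have "\<dots> \<le> 1/2 * (norm (\<phi> u) + norm (adj (\<phi> u)))"
    by (rule mult_left_mono[OF norm_triangle_ineq]) simp
  finally show ?thesis
    using \<open>norm (\<phi> u) = 1\<close> by simp
qed

lemma norm_cx_le:
  assumes h: "continuous_on UNIV h" and bound: "\<And>x. cmod (h x) \<le> c"
  shows "norm (\<phi> h) \<le> c"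
proof (cases "c > 0")
  case False
  then have "h = (\<lambda>x. 0)"
    using bound by (metis norm_le_zero_iff order.trans not_less)
  then show ?thesis
    using cx_zero bound[of undefined] by simp
next
  case True
  define g where "g x = (cmod (h x))\<^sup>2 / c\<^sup>2" for x
  have g: "continuous_on UNIV g"
    unfolding g_def using True by (intro continuous_intros h) auto
  have "\<bar>g x\<bar> \<le> 1" for x
    using True power_mono[OF bound[of x]] by (simp add: g_def)
  then have "norm (\<phi> (\<lambda>x. of_real (g x))) \<le> 1"
    by (rule norm_cx_of_real_le_one[OF g])
  moreover have "(\<lambda>x. cnj (h x) * h x) = (\<lambda>x. of_real (c\<^sup>2) * of_real (g x))"
    using True by (auto simp: g_def) (metis complex_norm_square mult.commute of_real_power)
  then have "adj (\<phi> h) * \<phi> h = cscale (of_real (c\<^sup>2)) (\<phi> (\<lambda>x. of_real (g x)))"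
    using cx_mult[of "\<lambda>x. cnj (h x)" h] cx_adj[OF h] cx_scale[OF continuous_on_of_real[OF g]] h
    by simp
  then have "(norm (\<phi> h))\<^sup>2 = c\<^sup>2 * norm (\<phi> (\<lambda>x. of_real (g x)))"
    using cstar_identity[of "\<phi> h"] by (simp add: norm_cscale norm_power)
  ultimately have "(norm (\<phi> h))\<^sup>2 \<le> c\<^sup>2"
    by (simp add: mult_left_le)
  then show ?thesis
    by (rule power2_le_imp_le) (use True in simp)
qed

end

section \<open>Elements of the fibre ideal are locally small\<close>

definition cutoff_in :: "'x set \<Rightarrow> ('x::topological_space \<Rightarrow> complex) \<Rightarrow> bool" where
  "cutoff_in U k \<longleftrightarrow> continuous_on UNIV k \<and> (\<forall>x. cmod (k x) \<le> 1) \<and> (\<forall>x. x \<notin> U \<longrightarrow> k x = 0)"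

definition locally_small :: "(('x::topological_space \<Rightarrow> complex) \<Rightarrow> 'a::cstar_algebra) \<Rightarrow> 'x \<Rightarrow> 'a \<Rightarrow> bool" where
  "locally_small \<phi> x z \<longleftrightarrow>
     (\<forall>\<epsilon>>0. \<exists>U. open U \<and> x \<in> U \<and> (\<forall>k. cutoff_in U k \<longrightarrow> norm (\<phi> k * z) \<le> \<epsilon>))"

lemma cutoff_in_mono: "cutoff_in U k \<Longrightarrow> U \<subseteq> V \<Longrightarrow> cutoff_in V k"
  unfolding cutoff_in_def by blast

lemma locally_small_zero: "locally_small \<phi> x 0"
  unfolding locally_small_def by (intro allI impI exI[of _ UNIV]) auto

lemma norm_cx_cutoff_mult_le:
  assumes cx: "CX_algebra \<phi>" and k: "cutoff_in U k" and f: "continuous_on UNIV f"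
    and bound: "\<And>y. y \<in> U \<Longrightarrow> cmod (f y) \<le> \<delta>" and "\<delta> \<ge> 0"
  shows "norm (\<phi> k * \<phi> f) \<le> \<delta>"
proof -
  have "continuous_on UNIV k"
    using k by (simp add: cutoff_in_def)
  have "continuous_on UNIV (\<lambda>y. k y * f y)"
    by (intro continuous_intros \<open>continuous_on UNIV k\<close> f)
  moreover have "cmod (k y * f y) \<le> \<delta>" for y
  proof (cases "y \<in> U")
    case True
    then have "cmod (k y) * cmod (f y) \<le> 1 * \<delta>"
      using k bound by (intro mult_mono) (auto simp: cutoff_in_def)
    then show ?thesis
      by (simp add: norm_mult)
  qed (use k \<open>\<delta> \<ge> 0\<close> in \<open>simp add: cutoff_in_def\<close>)
  ultimately show ?thesis
    unfolding cx_mult[OF cx \<open>continuous_on UNIV k\<close> f, symmetric] by (rule norm_cx_le[OF cx])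
qed

lemma locally_small_generator:
  assumes cx: "CX_algebra \<phi>" and f: "continuous_on UNIV f" "f x = 0"
  shows "locally_small \<phi> x (\<phi> f * d)"
  unfolding locally_small_def
proof (intro allI impI)
  fix \<epsilon> :: real
  assume "\<epsilon> > 0"
  have "norm d + 1 > 0"
    by (simp add: add_nonneg_pos)
  define \<delta> where "\<delta> = \<epsilon> / (norm d + 1)"
  have "\<delta> > 0"
    unfolding \<delta>_def using \<open>\<epsilon> > 0\<close> \<open>norm d + 1 > 0\<close> by simp
  define U where "U = f -` ball 0 \<delta>"
  have "open U" "x \<in> U"
    unfolding U_def using f \<open>\<delta> > 0\<close> by (auto intro: open_vimage)
  moreover have "norm (\<phi> k * (\<phi> f * d)) \<le> \<epsilon>" if k: "cutoff_in U k" for k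
  proof -
    have "norm (\<phi> k * \<phi> f) \<le> \<delta>"
      using \<open>\<delta> > 0\<close> by (intro norm_cx_cutoff_mult_le[OF cx k f(1)]) (auto simp: U_def dist_norm)
    then have "norm (\<phi> k * (\<phi> f * d)) \<le> \<delta> * norm d"
      unfolding mult.assoc[symmetric] by (rule norm_mult_le) simp
    also have "\<dots> \<le> \<delta> * (norm d + 1)"
      using \<open>\<delta> > 0\<close> by simp
    also have "\<dots> = \<epsilon>"
      unfolding \<delta>_def using \<open>norm d + 1 > 0\<close> by simp
    finally show ?thesis .
  qed
  ultimately show "\<exists>U. open U \<and> x \<in> U \<and> (\<forall>k. cutoff_in U k \<longrightarrow> norm (\<phi> k * (\<phi> f * d)) \<le> \<epsilon>)"
    by blast
qed

lemma locally_small_add_scaleR: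
  assumes a: "locally_small \<phi> x a" and b: "locally_small \<phi> x b"
  shows "locally_small \<phi> x (c *\<^sub>R a + b)"
  unfolding locally_small_def
proof (intro allI impI)
  fix \<epsilon> :: real
  assume "\<epsilon> > 0"
  define \<epsilon>' where "\<epsilon>' = \<epsilon> / (2 * (\<bar>c\<bar> + 1))"
  have "\<epsilon>' > 0"
    unfolding \<epsilon>'_def using \<open>\<epsilon> > 0\<close> by (simp add: add_nonneg_pos)
  then obtain U1 where U1: "open U1" "x \<in> U1" "\<And>k. cutoff_in U1 k \<Longrightarrow> norm (\<phi> k * a) \<le> \<epsilon>'"
    using a unfolding locally_small_def by blast
  obtain U2 where U2: "open U2" "x \<in> U2" "\<And>k. cutoff_in U2 k \<Longrightarrow> norm (\<phi> k * b) \<le> \<epsilon> / 2"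
    using b \<open>\<epsilon> > 0\<close> unfolding locally_small_def by (meson half_gt_zero)
  have "norm (\<phi> k * (c *\<^sub>R a + b)) \<le> \<epsilon>" if k: "cutoff_in (U1 \<inter> U2) k" for k
  proof -
    have "norm (\<phi> k * (c *\<^sub>R a + b)) \<le> \<bar>c\<bar> * norm (\<phi> k * a) + norm (\<phi> k * b)"
      by (metis distrib_left mult_scaleR_right norm_scaleR norm_triangle_ineq)
    also have "\<dots> \<le> \<bar>c\<bar> * \<epsilon>' + \<epsilon> / 2"
      using U1(3) U2(3) cutoff_in_mono[OF k] by (intro add_mono mult_left_mono) auto
    also have "\<bar>c\<bar> * \<epsilon>' \<le> \<epsilon> / 2"
      using \<open>\<epsilon> > 0\<close> by (simp add: \<epsilon>'_def field_simps)
    finally show ?thesis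
      by simp
  qed
  then show "\<exists>U. open U \<and> x \<in> U \<and> (\<forall>k. cutoff_in U k \<longrightarrow> norm (\<phi> k * (c *\<^sub>R a + b)) \<le> \<epsilon>)"
    using U1 U2 by (intro exI[of _ "U1 \<inter> U2"]) auto
qed

lemma locally_small_closure:
  assumes cx: "CX_algebra \<phi>" and z: "z \<in> closure S" and S: "\<And>w. w \<in> S \<Longrightarrow> locally_small \<phi> x w"
  shows "locally_small \<phi> x z"
  unfolding locally_small_def
proof (intro allI impI)
  fix \<epsilon> :: real
  assume "\<epsilon> > 0"
  then obtain w where w: "w \<in> S" "dist w z < \<epsilon> / 2"
    using z closure_approachable by (metis half_gt_zero)
  obtain U where U: "open U" "x \<in> U" "\<And>k. cutoff_in U k \<Longrightarrow> norm (\<phi> k * w) \<le> \<epsilon> / 2"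
    using S[OF w(1)] \<open>\<epsilon> > 0\<close> unfolding locally_small_def by (meson half_gt_zero)
  have "norm (\<phi> k * z) \<le> \<epsilon>" if k: "cutoff_in U k" for k
  proof -
    have "norm (\<phi> k) \<le> 1"
      using k norm_cx_le[OF cx] by (simp add: cutoff_in_def)
    have "norm (\<phi> k * z) \<le> norm (\<phi> k * (z - w)) + norm (\<phi> k * w)"
      by (metis diff_add_cancel norm_triangle_ineq right_diff_distrib)
    also have "\<dots> \<le> norm (\<phi> k) * norm (z - w) + \<epsilon> / 2"
      using U(3)[OF k] by (intro add_mono norm_mult_ineq)
    also have "\<dots> \<le> 1 * (\<epsilon> / 2) + \<epsilon> / 2"
      using \<open>norm (\<phi> k) \<le> 1\<close> w(2)
      by (intro add_mono mult_mono) (auto simp: dist_norm norm_minus_commute)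
    finally show ?thesis
      by simp
  qed
  then show "\<exists>U. open U \<and> x \<in> U \<and> (\<forall>k. cutoff_in U k \<longrightarrow> norm (\<phi> k * z) \<le> \<epsilon>)"
    using U by blast
qed

lemma locally_small_fibre_ideal:
  assumes cx: "CX_algebra \<phi>" and z: "z \<in> fibre_ideal \<phi> x"
  shows "locally_small \<phi> x z"
proof -
  let ?G = "{\<phi> f * d | f d. continuous_on UNIV f \<and> f x = 0}"
  have span_small: "locally_small \<phi> x w" if "w \<in> span ?G" for w
    using that
  proof (induction rule: span_induct_alt)
    case base
    then show ?case
      by (rule locally_small_zero)
  next
    case (step c g w)
    then have "locally_small \<phi> x g"
      using locally_small_generator[OF cx] by blast
    then show ?case
      using step.IH by (rule locally_small_add_scaleR)
  qed
  show ?thesis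
    using z unfolding fibre_ideal_def by (rule locally_small_closure[OF cx _ span_small])
qed

lemma locally_small_common_nbhd:
  assumes "locally_small \<phi> x a" "locally_small \<phi> x b" "locally_small \<phi> x c" "\<epsilon> > 0"
  obtains U where "open U" "x \<in> U"
    "\<And>k. cutoff_in U k \<Longrightarrow> norm (\<phi> k * a) \<le> \<epsilon> \<and> norm (\<phi> k * b) \<le> \<epsilon> \<and> norm (\<phi> k * c) \<le> \<epsilon>"
proof -
  obtain Ua where "open Ua" "x \<in> Ua" "\<And>k. cutoff_in Ua k \<Longrightarrow> norm (\<phi> k * a) \<le> \<epsilon>"
    using assms(1,4) unfolding locally_small_def by blast
  moreover obtain Ub where "open Ub" "x \<in> Ub" "\<And>k. cutoff_in Ub k \<Longrightarrow> norm (\<phi> k * b) \<le> \<epsilon>"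
    using assms(2,4) unfolding locally_small_def by blast
  moreover obtain Uc where "open Uc" "x \<in> Uc" "\<And>k. cutoff_in Uc k \<Longrightarrow> norm (\<phi> k * c) \<le> \<epsilon>"
    using assms(3,4) unfolding locally_small_def by blast
  ultimately show ?thesis
    using that[of "Ua \<inter> Ub \<inter> Uc"] cutoff_in_mono[of "Ua \<inter> Ub \<inter> Uc"] by blast
qed

section \<open>Local correction of the lifts\<close>

lemma plateau_function:
  fixes x :: "'x::t2_space"
  assumes "compact (UNIV :: 'x set)" and "open U" and "x \<in> U"
  obtains g :: "'x \<Rightarrow> real" and V where "continuous_on UNIV g" "\<And>y. 0 \<le> g y \<and> g y \<le> 1"
    "\<And>y. y \<notin> U \<Longrightarrow> g y = 0" "open V" "x \<in> V" "\<And>y. y \<in> V \<Longrightarrow> g y = 1"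
proof -
  have "completely_regular_space (euclidean :: 'x topology)"
  proof (rule locally_compact_regular_imp_completely_regular_space)
    have "compact_space (euclidean :: 'x topology)"
      using assms(1) by (simp add: compact_space_def)
    then show "locally_compact_space (euclidean :: 'x topology)"
      by (rule compact_imp_locally_compact_space)
    have "Hausdorff_space (euclidean :: 'x topology)"
      unfolding Hausdorff_space_def by (simp add: separation_t2 disjnt_def)
    then show "Hausdorff_space (euclidean :: 'x topology) \<or> regular_space (euclidean :: 'x topology)"
      by blast
  qed
  moreover have "closedin euclidean (- U)" "x \<in> topspace euclidean - (- U)"
    using assms(2,3) by (auto simp: closed_Compl)
  ultimately obtain f :: "'x \<Rightarrow> real"
    where f: "continuous_map euclidean (top_of_set {0..1}) f" "f x = 0" "f ` (- U) \<subseteq> {1}"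
    unfolding completely_regular_space_def by metis
  have "continuous_on UNIV f" and f01: "\<And>y. f y \<in> {0..1}"
    using f(1) by (auto simp: continuous_map_in_subtopology)
  show ?thesis
  proof
    show "continuous_on UNIV (\<lambda>y. min 1 (2 * (1 - f y)))"
      by (intro continuous_intros \<open>continuous_on UNIV f\<close>)
    show "open (f -` {..<1/2})"
      by (rule open_vimage[OF open_lessThan \<open>continuous_on UNIV f\<close>])
  qed (use f f01 in auto)
qed

lemma cx_normalize_isometry:
  assumes cx: "CX_algebra \<phi>" and g: "continuous_on UNIV g"
    and small: "norm (\<phi> (\<lambda>x. of_real (g x)) * (adj s * s - 1)) \<le> 1/2"
  obtains r where "adj r = r" "norm r \<le> 2"
    "\<And>k. continuous_on UNIV k \<Longrightarrow> (\<And>x. k x * of_real (g x) = k x) \<Longrightarrow>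
       \<phi> k * (adj (s * r) * (s * r)) = \<phi> k"
proof -
  define P where "P = \<phi> (\<lambda>x. of_real (g x))"
  define a where "a = P * (adj s * s - 1)"
  have "continuous_on UNIV (\<lambda>x. complex_of_real (g x))"
    using g by (rule continuous_on_of_real)
  then have "adj a = a"
    unfolding a_def P_def
    by (simp add: adj_mult adj_diff adj_adj cx_of_real_selfadjoint[OF cx g] cx_central[OF cx])
  then obtain r where r: "adj r = r" "norm r \<le> 2" "r * (1 + a) * r = 1"
    using selfadjoint_inverse_sqrt small unfolding a_def P_def by blast
  have "\<phi> k * (adj (s * r) * (s * r)) = \<phi> k"
    if k: "continuous_on UNIV k" and kg: "\<And>x. k x * of_real (g x) = k x" for k
  proof -
    have central: "\<And>z. \<phi> k * z = z * \<phi> k"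
      using cx_central[OF cx k] by blast
    have "\<phi> k * P = \<phi> (\<lambda>x. k x * of_real (g x))"
      unfolding P_def by (rule cx_mult[OF cx k \<open>continuous_on UNIV (\<lambda>x. of_real (g x))\<close>, symmetric])
    also have "\<dots> = \<phi> k"
      by (simp only: kg)
    finally have "\<phi> k * P = \<phi> k" .
    have "\<phi> k * (1 + a) = \<phi> k + (\<phi> k * P) * (adj s * s - 1)"
      unfolding a_def by (simp add: distrib_left mult.assoc)
    also have "\<dots> = \<phi> k * (adj s * s)"
      using \<open>\<phi> k * P = \<phi> k\<close> by (simp add: right_diff_distrib)
    finally have "\<phi> k * (adj (s * r) * (s * r)) = r * (\<phi> k * (1 + a)) * r"
      using r(1) by (simp add: adj_mult mult.assoc central_left_commute[OF central])
    also have "\<dots> = \<phi> k * (r * (1 + a) * r)"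
      by (simp add: mult.assoc central_left_commute[OF central])
    finally show ?thesis
      using r(3) by simp
  qed
  with r show ?thesis
    using that by blast
qed

definition agree_on :: "(('x::topological_space \<Rightarrow> complex) \<Rightarrow> 'a::cstar_algebra) \<Rightarrow> 'x set \<Rightarrow> 'a \<Rightarrow> 'a \<Rightarrow> bool" where
  "agree_on \<phi> U z w \<longleftrightarrow>
     (\<forall>k. continuous_on UNIV k \<longrightarrow> (\<forall>x. x \<notin> U \<longrightarrow> k x = 0) \<longrightarrow> \<phi> k * z = \<phi> k * w)"

lemma agree_onD:
  "agree_on \<phi> U z w \<Longrightarrow> continuous_on UNIV k \<Longrightarrow> (\<And>x. x \<notin> U \<Longrightarrow> k x = 0) \<Longrightarrow> \<phi> k * z = \<phi> k * w"
  unfolding agree_on_def by blast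

lemma agree_on_subset: "agree_on \<phi> U z w \<Longrightarrow> V \<subseteq> U \<Longrightarrow> agree_on \<phi> V z w"
  unfolding agree_on_def by blast

lemma cx_local_isometry:
  fixes \<phi> :: "('x::t2_space \<Rightarrow> complex) \<Rightarrow> 'a::cstar_algebra"
  assumes cx: "CX_algebra \<phi>" and cpt: "compact (UNIV :: 'x set)" and U: "open U" "x \<in> U"
    and small: "\<And>k. cutoff_in U k \<Longrightarrow> norm (\<phi> k * (adj s * s - 1)) \<le> 1/2"
  obtains r V where "adj r = r" "norm r \<le> 2" "open V" "x \<in> V" "V \<subseteq> U"
    "agree_on \<phi> V (adj (s * r) * (s * r)) 1"
proof -
  obtain g :: "'x \<Rightarrow> real" and V where g: "continuous_on UNIV g" "\<And>y. 0 \<le> g y \<and> g y \<le> 1"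
    "\<And>y. y \<notin> U \<Longrightarrow> g y = 0" and V: "open V" "x \<in> V" "\<And>y. y \<in> V \<Longrightarrow> g y = 1"
    using plateau_function[OF cpt U] by blast
  have "cutoff_in U (\<lambda>y. of_real (g y))"
    unfolding cutoff_in_def using g by (auto intro: continuous_on_of_real)
  then obtain r where r: "adj r = r" "norm r \<le> 2"
    and iso: "\<And>k. continuous_on UNIV k \<Longrightarrow> (\<And>x. k x * of_real (g x) = k x) \<Longrightarrow>
       \<phi> k * (adj (s * r) * (s * r)) = \<phi> k"
    using cx_normalize_isometry[OF cx g(1)] small by metis
  have "V \<subseteq> U"
    using g(3) V(3) by force
  moreover have "agree_on \<phi> V (adj (s * r) * (s * r)) 1"
    unfolding agree_on_def
  proof (intro allI impI)
    fix k :: "'x \<Rightarrow> complex"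
    assume "continuous_on UNIV k" "\<forall>y. y \<notin> V \<longrightarrow> k y = 0"
    moreover have "k y * of_real (g y) = k y" for y
      using \<open>\<forall>y. y \<notin> V \<longrightarrow> k y = 0\<close> V(3) by (cases "y \<in> V") auto
    ultimately show "\<phi> k * (adj (s * r) * (s * r)) = \<phi> k * 1"
      using iso by simp
  qed
  ultimately show ?thesis
    using that r V by blast
qed

text \<open>Up to terms containing \<open>S\<^sub>1 s\<^sub>1 - 1\<close> or \<open>S\<^sub>2 s\<^sub>2 - 1\<close>, \<open>S\<^sub>1 s\<^sub>2\<close> equals \<open>S\<^sub>1 (s\<^sub>1 S\<^sub>1 s\<^sub>2 S\<^sub>2) s\<^sub>2\<close>.\<close>

lemma central_cross_term_bound:
  fixes P S1 s1 S2 s2 :: "'a::real_normed_algebra_1"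
  assumes central: "\<And>z. P * z = z * P"
    and e1: "norm (P * (S1 * s1 - 1)) \<le> \<delta>" and e2: "norm (P * (S2 * s2 - 1)) \<le> \<delta>"
    and e3: "norm (P * (s1 * S1 * (s2 * S2))) \<le> \<delta>"
  shows "norm (P * (S1 * s2)) \<le> \<delta> * (norm S1 * norm s2 + norm (S1 * s2) * (2 + norm (S2 * s2 - 1)))"
proof -
  define f1 f2 b where "f1 = S1 * s1 - 1" and "f2 = S2 * s2 - 1" and "b = S1 * s2"
  have "S1 * (P * (s1 * S1 * (s2 * S2))) * s2 = P * ((1 + f1) * b * (1 + f2))"
    by (simp add: f1_def f2_def b_def mult.assoc central_left_commute[OF central])
  also have "\<dots> = P * b + ((P * f1) * b + b * (P * f2) + (P * f1) * b * f2)"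
    by (simp add: distrib_left distrib_right mult.assoc add.assoc central_left_commute[OF central])
  finally have Pb: "P * b
      = S1 * (P * (s1 * S1 * (s2 * S2))) * s2 - ((P * f1) * b + b * (P * f2) + (P * f1) * b * f2)"
    (is "_ = ?T - (?A + ?B + ?C)") by simp
  have "norm (P * b) \<le> norm ?T + norm ?A + norm ?B + norm ?C"
    unfolding Pb using norm_triangle_ineq4[of ?T "?A + ?B + ?C"] norm_triangle_ineq[of "?A + ?B" ?C]
      norm_triangle_ineq[of ?A ?B] by linarith
  also have "\<dots> \<le> norm S1 * \<delta> * norm s2 + \<delta> * norm b + norm b * \<delta> + \<delta> * norm b * norm f2"
    using e1 e2 e3 unfolding f1_def f2_def
    by (intro add_mono norm_mult_le order.refl) auto
  finally show ?thesis
    by (simp add: b_def f2_def algebra_simps)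
qed

lemma central_gram_schmidt:
  fixes P S s T t :: "'a::ring_1"
  assumes central: "\<And>z. P * z = z * P" and isometry: "P * (T * t) = P"
  shows "P * (T * (s - t * (T * s))) = 0"
    and "P * ((S - S * t * T) * (s - t * (T * s)) - 1) = P * (S * s - 1) - S * t * (P * (T * s))"
proof -
  show "P * (T * (s - t * (T * s))) = 0"
    using isometry by (simp add: right_diff_distrib flip: mult.assoc)
  have expand: "(S - S * t * T) * (s - t * (T * s))
      = S * s - S * t * (T * s) - S * t * (T * s) + S * t * (T * t) * (T * s)"
    by (simp add: algebra_simps)
  have "P * (S * t * (T * t) * (T * s)) = S * t * (P * (T * t)) * (T * s)"
    by (metis central mult.assoc)
  then have PC: "P * (S * t * (T * t) * (T * s)) = S * t * (P * (T * s))"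
    by (simp add: isometry mult.assoc)
  have PB: "P * (S * t * (T * s)) = S * t * (P * (T * s))"
    by (metis central mult.assoc)
  show "P * ((S - S * t * T) * (s - t * (T * s)) - 1) = P * (S * s - 1) - S * t * (P * (T * s))"
    unfolding expand by (simp add: right_diff_distrib distrib_left PB PC)
qed

lemma central_orthogonalization_bound:
  fixes P u v r :: "'a::cstar_algebra"
  defines "t \<equiv> u * r"
  defines "w \<equiv> v - t * (adj t * v)"
  assumes central: "\<And>z. P * z = z * P" and r: "adj r = r" "norm r \<le> 2"
    and isometry: "P * (adj t * t) = P"
    and small: "norm (P * (adj u * u - 1)) \<le> \<delta>" "norm (P * (adj v * v - 1)) \<le> \<delta>"
      "norm (P * (u * adj u * (v * adj v))) \<le> \<delta>"
  shows "norm (P * (adj w * w - 1))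
    \<le> \<delta> * (1 + 4 * norm u * norm v * (norm u * norm v + norm (adj u * v) * (2 + norm (adj v * v - 1))))"
proof -
  have "adj w = adj v - adj v * t * adj t"
    by (simp add: w_def adj_diff adj_mult adj_adj mult.assoc)
  then have "P * (adj w * w - 1) = P * (adj v * v - 1) - adj v * t * (P * (r * (adj u * v)))"
    using central_gram_schmidt(2)[OF central isometry, of "adj v" v] r(1)
    by (simp add: w_def t_def adj_mult mult.assoc)
  also have "norm \<dots> \<le> \<delta> + norm v * (norm u * 2) * (2 * norm (P * (adj u * v)))"
  proof (rule order.trans[OF norm_triangle_ineq4 add_mono[OF small(2)]])
    have "norm t \<le> norm u * 2"
      unfolding t_def using r(2) by (rule norm_mult_le[OF order.refl])
    have "P * (r * (adj u * v)) = r * (P * (adj u * v))"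
      by (rule central_left_commute[OF central])
    then have "norm (P * (r * (adj u * v))) \<le> 2 * norm (P * (adj u * v))"
      using r(2) by (simp add: norm_mult_le)
    then show "norm (adj v * t * (P * (r * (adj u * v))))
        \<le> norm v * (norm u * 2) * (2 * norm (P * (adj u * v)))"
      using \<open>norm t \<le> norm u * 2\<close> by (intro norm_mult_le[OF norm_mult_le]) simp_all
  qed
  also have "\<dots> \<le> \<delta> + norm v * (norm u * 2) * (2 * (\<delta> * (norm u * norm v
      + norm (adj u * v) * (2 + norm (adj v * v - 1)))))"
    using central_cross_term_bound[OF central, of "adj u" u \<delta> "adj v" v] small
    by (intro add_left_mono mult_left_mono) (simp_all add: adj_adj)
  finally show ?thesis
    by (simp add: algebra_simps)
qed

lemma agree_on_gram_schmidt:
  fixes \<phi> :: "('x::topological_space \<Rightarrow> complex) \<Rightarrow> 'a::cstar_algebra"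
  assumes cx: "CX_algebra \<phi>" and isometry: "agree_on \<phi> U (adj t * t) 1"
  shows "agree_on \<phi> U (adj t * ((s - t * (adj t * s)) * r)) 0"
  unfolding agree_on_def
proof (intro allI impI)
  fix k :: "'x \<Rightarrow> complex"
  assume k: "continuous_on UNIV k" "\<forall>x. x \<notin> U \<longrightarrow> k x = 0"
  then have "\<phi> k * (adj t * t) = \<phi> k"
    using agree_onD[OF isometry] by auto
  then have "\<phi> k * (adj t * (s - t * (adj t * s))) = 0"
    by (rule central_gram_schmidt(1)[OF cx_central[OF cx k(1)]])
  then show "\<phi> k * (adj t * ((s - t * (adj t * s)) * r)) = \<phi> k * 0"
    by (simp flip: mult.assoc)
qed

definition orthogonal_isometries_on ::
    "(('x::topological_space \<Rightarrow> complex) \<Rightarrow> 'a::cstar_algebra) \<Rightarrow> 'x set \<Rightarrow> 'a \<Rightarrow> 'a \<Rightarrow> bool" where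
  "orthogonal_isometries_on \<phi> U t1 t2 \<longleftrightarrow>
     agree_on \<phi> U (adj t1 * t1) 1 \<and> agree_on \<phi> U (adj t2 * t2) 1 \<and> agree_on \<phi> U (adj t1 * t2) 0"

lemma local_orthogonal_isometries:
  fixes \<phi> :: "('x::t2_space \<Rightarrow> complex) \<Rightarrow> 'a::cstar_algebra"
  assumes cx: "CX_algebra \<phi>" and cpt: "compact (UNIV :: 'x set)"
    and fibre: "properly_infinite_mod (fibre_ideal \<phi> x)"
  shows "\<exists>U t1 t2. open U \<and> x \<in> U \<and> orthogonal_isometries_on \<phi> U t1 t2"
proof -
  obtain s1 s2 where fibre_rel: "adj s1 * s1 - 1 \<in> fibre_ideal \<phi> x" "adj s2 * s2 - 1 \<in> fibre_ideal \<phi> x"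
    "s1 * adj s1 * (s2 * adj s2) \<in> fibre_ideal \<phi> x"
    using fibre unfolding properly_infinite_mod_def by blast
  define K where "K = norm s1 * norm s2 + norm (adj s1 * s2) * (2 + norm (adj s2 * s2 - 1))"
  define M where "M = 4 * norm s1 * norm s2 * K"
  have "M \<ge> 0"
    unfolding M_def K_def by simp
  define \<delta> where "\<delta> = 1 / (2 * (1 + M))"
  have "\<delta> > 0" "\<delta> \<le> 1/2" "\<delta> * (1 + M) = 1/2"
    using \<open>M \<ge> 0\<close> unfolding \<delta>_def by (auto simp: field_simps)
  obtain U0 where U0: "open U0" "x \<in> U0" and small: "\<And>k. cutoff_in U0 k \<Longrightarrow>
      norm (\<phi> k * (adj s1 * s1 - 1)) \<le> \<delta> \<and> norm (\<phi> k * (adj s2 * s2 - 1)) \<le> \<delta>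
      \<and> norm (\<phi> k * (s1 * adj s1 * (s2 * adj s2))) \<le> \<delta>"
    using locally_small_common_nbhd[OF locally_small_fibre_ideal[OF cx fibre_rel(1)]
      locally_small_fibre_ideal[OF cx fibre_rel(2)] locally_small_fibre_ideal[OF cx fibre_rel(3)] \<open>\<delta> > 0\<close>]
    by blast
  obtain r1 V1 where r1: "adj r1 = r1" "norm r1 \<le> 2" and V1: "open V1" "x \<in> V1" "V1 \<subseteq> U0"
    and iso1: "agree_on \<phi> V1 (adj (s1 * r1) * (s1 * r1)) 1"
    using cx_local_isometry[OF cx cpt U0, of s1] small \<open>\<delta> \<le> 1/2\<close> by force
  define w where "w = s2 - (s1 * r1) * (adj (s1 * r1) * s2)"
  have "norm (\<phi> k * (adj w * w - 1)) \<le> 1/2" if k: "cutoff_in V1 k" for k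
  proof -
    have central: "\<And>z. \<phi> k * z = z * \<phi> k" and "\<phi> k * (adj (s1 * r1) * (s1 * r1)) = \<phi> k"
      using k cx_central[OF cx] agree_onD[OF iso1] unfolding cutoff_in_def by auto
    then have "norm (\<phi> k * (adj w * w - 1)) \<le> \<delta> * (1 + M)"
      using central_orthogonalization_bound[OF central r1] small[OF cutoff_in_mono[OF k V1(3)]]
      unfolding w_def M_def K_def by simp
    then show ?thesis
      using \<open>\<delta> * (1 + M) = 1/2\<close> by simp
  qed
  then obtain r2 V2 where V2: "open V2" "x \<in> V2" "V2 \<subseteq> V1"
    and iso2: "agree_on \<phi> V2 (adj (w * r2) * (w * r2)) 1"
    using cx_local_isometry[OF cx cpt V1(1,2), of w] by metis
  have "orthogonal_isometries_on \<phi> V2 (s1 * r1) (w * r2)"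
    using agree_on_subset[OF iso1 V2(3)] iso2 agree_on_gram_schmidt[OF cx agree_on_subset[OF iso1 V2(3)]]
    unfolding orthogonal_isometries_on_def w_def by blast
  with V2(1,2) show ?thesis
    by blast
qed

section \<open>Orthonormal families and matrix isometries\<close>

lemma orthogonal_isometries_onD:
  assumes "orthogonal_isometries_on \<phi> U t1 t2" "continuous_on UNIV k" "\<And>x. x \<notin> U \<Longrightarrow> k x = 0"
  shows "\<phi> k * (adj t1 * t1) = \<phi> k" "\<phi> k * (adj t2 * t2) = \<phi> k" "\<phi> k * (adj t1 * t2) = 0"
  using assms agree_onD[of \<phi> U _ _ k] unfolding orthogonal_isometries_on_def by auto

lemma central_power_cancel:
  fixes P A t :: "'a::ring_1"
  assumes central: "\<And>z. P * z = z * P" and isometry: "P * (A * t) = P"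
  shows "m \<le> n \<Longrightarrow> P * (A ^ m * t ^ n) = P * t ^ (n - m)"
proof (induction m arbitrary: n)
  case (Suc m)
  then obtain n' where n: "n = Suc n'" and "m \<le> n'"
    by (cases n) auto
  have "P * (A ^ Suc m * t ^ n) = A ^ m * ((P * (A * t)) * t ^ n')"
    unfolding power_Suc2[of A] n power_Suc[of t]
    by (simp only: mult.assoc central_left_commute[OF central])
  also have "\<dots> = A ^ m * (P * t ^ n')"
    by (simp only: isometry)
  also have "\<dots> = P * (A ^ m * t ^ n')"
    by (rule central_left_commute[OF central, symmetric])
  also have "\<dots> = P * t ^ (n - Suc m)"
    using Suc.IH \<open>m \<le> n'\<close> n by simp
  finally show ?case .
qed simp

text \<open>The words \<open>t\<^sub>2\<^sup>m t\<^sub>1\<close> are the usual copy of the generators of \<open>\<O>\<^sub>\<infinity>\<close> inside \<open>\<O>\<^sub>2\<close>.\<close>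

lemma central_orthonormal_words:
  fixes P t1 t2 :: "'a::cstar_algebra"
  assumes central: "\<And>z. P * z = z * P" and selfadjoint: "adj P = P"
    and iso1: "P * (adj t1 * t1) = P" and iso2: "P * (adj t2 * t2) = P" and orth: "P * (adj t1 * t2) = 0"
  shows "P * (adj (t2 ^ m * t1) * (t2 ^ n * t1)) = (if m = n then P else 0)"
proof -
  have ordered: "P * (adj (t2 ^ m * t1) * (t2 ^ n * t1)) = (if m = n then P else 0)"
    if "m \<le> n" for m n
  proof -
    have "P * (adj (t2 ^ m * t1) * (t2 ^ n * t1)) = adj t1 * (P * (adj t2 ^ m * t2 ^ n) * t1)"
      by (simp add: adj_mult adj_power mult.assoc central_left_commute[OF central])
    also have "\<dots> = adj t1 * (P * t2 ^ (n - m) * t1)"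
      using central_power_cancel[OF central iso2 that] by simp
    also have "\<dots> = (if m = n then P else 0)"
    proof (cases "m = n")
      case True
      then have "adj t1 * (P * t2 ^ (n - m) * t1) = P * (adj t1 * t1)"
        by (simp add: mult.assoc central_left_commute[OF central])
      then show ?thesis
        using True iso1 by simp
    next
      case False
      define d where "d = n - Suc m"
      have "n - m = Suc d"
        unfolding d_def using that False by linarith
      then have "adj t1 * (P * t2 ^ (n - m) * t1) = (P * (adj t1 * t2)) * (t2 ^ d * t1)"
        by (simp add: mult.assoc central_left_commute[OF central])
      then show ?thesis
        using False orth by simp
    qed
    finally show ?thesis .
  qed
  show ?thesis
  proof (cases "m \<le> n")
    case False
    have "adj (P * (adj (t2 ^ n * t1) * (t2 ^ m * t1))) = adj (t2 ^ m * t1) * (t2 ^ n * t1) * P"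
      by (simp add: adj_mult adj_adj selfadjoint mult.assoc)
    also have "\<dots> = P * (adj (t2 ^ m * t1) * (t2 ^ n * t1))"
      by (rule central[symmetric])
    finally show ?thesis
      using ordered[of n m] False by (auto simp: selfadjoint)
  qed (rule ordered)
qed

lemma orthogonal_isometries_on_words:
  fixes \<phi> :: "('x::topological_space \<Rightarrow> complex) \<Rightarrow> 'a::cstar_algebra"
  assumes cx: "CX_algebra \<phi>" and isometries: "orthogonal_isometries_on \<phi> U t1 t2"
    and h: "continuous_on UNIV h" "\<And>x. x \<notin> U \<Longrightarrow> h x = 0"
  shows "\<phi> (\<lambda>x. of_real (h x)) * (adj (t2 ^ m * t1) * (t2 ^ n * t1))
    = (if m = n then \<phi> (\<lambda>x. of_real (h x)) else 0)"
proof -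
  have continuous: "continuous_on UNIV (\<lambda>x. complex_of_real (h x))"
    using h(1) by (rule continuous_on_of_real)
  have "x \<notin> U \<Longrightarrow> complex_of_real (h x) = 0" for x
    by (simp add: h(2))
  from orthogonal_isometries_onD[OF isometries continuous this] show ?thesis
    by (rule central_orthonormal_words[OF cx_central[OF cx continuous] cx_of_real_selfadjoint[OF cx h(1)]])
qed

lemma compact_finite_positive_cover:
  fixes F :: "'x \<Rightarrow> 'x::topological_space \<Rightarrow> real"
  assumes cpt: "compact (UNIV :: 'x set)" and F: "\<And>x. continuous_on UNIV (F x)" "\<And>x. 0 < F x x"
  shows "\<exists>(n :: nat) p. \<forall>y. \<exists>j<n. 0 < F (p j) y"
proof -
  have "open {y. 0 < F x y}" for x
    using open_Collect_less[of "\<lambda>y. 0" "F x"] F(1) by simp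
  moreover have "UNIV \<subseteq> (\<Union>x\<in>UNIV. {y. 0 < F x y})"
    using F(2) by blast
  ultimately obtain C where "finite C" "UNIV \<subseteq> (\<Union>x\<in>C. {y. 0 < F x y})"
    using compactE_image[OF cpt] by metis
  then obtain xs where cover: "UNIV \<subseteq> (\<Union>x\<in>set xs. {y. 0 < F x y})"
    using finite_list by metis
  have "\<exists>j<length xs. 0 < F (xs ! j) y" for y
  proof -
    obtain x where "x \<in> set xs" "0 < F x y"
      using cover by blast
    then show ?thesis
      by (auto simp: in_set_conv_nth)
  qed
  then show ?thesis
    by blast
qed

lemma square_partition_of_unity:
  fixes U :: "'x::t2_space \<Rightarrow> 'x set"
  assumes cpt: "compact (UNIV :: 'x set)" and U: "\<And>x. open (U x)" "\<And>x. x \<in> U x"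
  obtains n :: nat and p :: "nat \<Rightarrow> 'x" and h :: "nat \<Rightarrow> 'x \<Rightarrow> real"
  where "n > 0" "\<And>j. continuous_on UNIV (h j)" "\<And>j y. y \<notin> U (p j) \<Longrightarrow> h j y = 0"
    "\<And>y. (\<Sum>j<n. (h j y)\<^sup>2) = 1"
proof -
  have "\<exists>f :: 'x \<Rightarrow> real. continuous_on UNIV f \<and> (\<forall>y. 0 \<le> f y) \<and> (\<forall>y. y \<notin> U x \<longrightarrow> f y = 0) \<and> f x = 1"
    for x
    using plateau_function[OF cpt U(1) U(2)[of x]] by metis
  then obtain F :: "'x \<Rightarrow> 'x \<Rightarrow> real" where F: "\<And>x. continuous_on UNIV (F x)" "\<And>x y. 0 \<le> F x y"
    "\<And>x y. y \<notin> U x \<Longrightarrow> F x y = 0" "\<And>x. F x x = 1"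
    by metis
  have "\<exists>(n :: nat) p. \<forall>y. \<exists>j<n. 0 < F (p j) y"
    by (rule compact_finite_positive_cover[OF cpt F(1)]) (simp add: F(4))
  then obtain n :: nat and p where cover: "\<forall>y. \<exists>j<n. 0 < F (p j) y"
    by blast
  define G where "G y = (\<Sum>j<n. (F (p j) y)\<^sup>2)" for y
  have G_pos: "G y > 0" for y
  proof -
    obtain j where "j < n" "0 < F (p j) y"
      using cover by blast
    then show ?thesis
      unfolding G_def by (intro sum_pos2[of _ j]) auto
  qed
  have "continuous_on UNIV G"
    unfolding G_def by (intro continuous_intros F(1))
  show ?thesis
  proof
    show "n > 0"
      using cover by (metis gr0I not_less0)
    show "continuous_on UNIV (\<lambda>y. F (p j) y / sqrt (G y))" for j
      using G_pos by (intro continuous_intros F(1) \<open>continuous_on UNIV G\<close>) (auto simp: less_imp_neq[symmetric])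
    show "y \<notin> U (p j) \<Longrightarrow> F (p j) y / sqrt (G y) = 0" for j y
      using F(3) by simp
    show "(\<Sum>j<n. (F (p j) y / sqrt (G y))\<^sup>2) = 1" for y
      using G_pos[of y] by (simp add: power_divide sum_divide_distrib[symmetric] G_def[symmetric])
  qed
qed

lemma mat_orthogonal_ranges:
  fixes S1 S2 :: "nat \<Rightarrow> nat \<Rightarrow> 'a::cstar_algebra"
  assumes "mat_eq l (mat_mult l (mat_adj S1) S2) (\<lambda>i j. 0)"
  shows "mat_eq l (mat_mult l (mat_mult l S1 (mat_adj S1)) (mat_mult l S2 (mat_adj S2))) (\<lambda>i j. 0)"
  unfolding mat_eq_def
proof (intro allI impI)
  fix i j
  have "mat_mult l (mat_mult l S1 (mat_adj S1)) (mat_mult l S2 (mat_adj S2)) i j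
      = (\<Sum>a<l. \<Sum>b<l. \<Sum>c<l. S1 i b * (adj (S1 a b) * S2 a c) * adj (S2 j c))"
    by (simp add: mat_mult_def mat_adj_def sum_product mult.assoc)
  also have "\<dots> = (\<Sum>b<l. \<Sum>a<l. \<Sum>c<l. S1 i b * (adj (S1 a b) * S2 a c) * adj (S2 j c))"
    by (rule sum.swap)
  also have "\<dots> = (\<Sum>b<l. \<Sum>c<l. \<Sum>a<l. S1 i b * (adj (S1 a b) * S2 a c) * adj (S2 j c))"
    by (rule sum.cong[OF refl], rule sum.swap)
  also have "\<dots> = (\<Sum>b<l. \<Sum>c<l. S1 i b * (\<Sum>a<l. adj (S1 a b) * S2 a c) * adj (S2 j c))"
    by (simp add: sum_distrib_left sum_distrib_right)
  also have "\<dots> = 0"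
    using assms by (simp add: mat_eq_def mat_mult_def mat_adj_def)
  finally show "mat_mult l (mat_mult l S1 (mat_adj S1)) (mat_mult l S2 (mat_adj S2)) i j = 0" .
qed

lemma mat_properly_infinite_of_orthonormal_columns:
  fixes C :: "nat \<Rightarrow> nat \<Rightarrow> 'a::cstar_algebra"
  assumes "\<And>m m'. m < 2 * l \<Longrightarrow> m' < 2 * l \<Longrightarrow> (\<Sum>i<l. adj (C i m) * C i m') = (if m = m' then 1 else 0)"
  shows "mat_properly_infinite TYPE('a) l"
proof -
  define C' where "C' i m = C i (l + m)" for i m
  have "mat_eq l (mat_mult l (mat_adj C) C) mat_one" "mat_eq l (mat_mult l (mat_adj C') C') mat_one"
    and orthogonal: "mat_eq l (mat_mult l (mat_adj C) C') (\<lambda>i j. 0)"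
    using assms by (simp_all add: mat_eq_def mat_mult_def mat_adj_def mat_one_def C'_def)
  moreover have "mat_eq l (mat_mult l (mat_mult l C (mat_adj C)) (mat_mult l C' (mat_adj C'))) (\<lambda>i j. 0)"
    using orthogonal by (rule mat_orthogonal_ranges)
  ultimately show ?thesis
    unfolding mat_properly_infinite_def by blast
qed

lemma orthonormal_columns_of_partition:
  fixes P :: "nat \<Rightarrow> 'a::cstar_algebra" and u :: "nat \<Rightarrow> nat \<Rightarrow> 'a"
  assumes central: "\<And>j z. P j * z = z * P j" and selfadjoint: "\<And>j. adj (P j) = P j"
    and partition: "(\<Sum>j<n. P j * P j) = 1"
    and orthonormal: "\<And>j m m'. P j * (adj (u j m) * u j m') = (if m = m' then P j else 0)"
  shows "(\<Sum>j<n. adj (P j * u j m) * (P j * u j m')) = (if m = m' then 1 else 0)"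
proof -
  have "adj (P j * u j m) * (P j * u j m') = P j * (P j * (adj (u j m) * u j m'))" for j
  proof -
    have "adj (P j * u j m) * (P j * u j m') = adj (u j m) * (P j * (P j * u j m'))"
      by (simp add: adj_mult selfadjoint mult.assoc)
    also have "\<dots> = P j * (adj (u j m) * (P j * u j m'))"
      by (rule central_left_commute[OF central, symmetric])
    also have "\<dots> = P j * (P j * (adj (u j m) * u j m'))"
      by (simp only: central_left_commute[OF central, of j "adj (u j m)" "u j m'"])
    finally show ?thesis .
  qed
  then show ?thesis
    using partition by (simp add: orthonormal)
qed

lemma cx_orthonormal_columns:
  fixes \<phi> :: "('x::topological_space \<Rightarrow> complex) \<Rightarrow> 'a::cstar_algebra"
    and h :: "nat \<Rightarrow> 'x \<Rightarrow> real" and u :: "nat \<Rightarrow> nat \<Rightarrow> 'a"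
  assumes cx: "CX_algebra \<phi>" and h: "\<And>j. continuous_on UNIV (h j)" "\<And>x. (\<Sum>j<n. (h j x)\<^sup>2) = 1"
    and orthonormal: "\<And>j m m'. \<phi> (\<lambda>x. of_real (h j x)) * (adj (u j m) * u j m')
      = (if m = m' then \<phi> (\<lambda>x. of_real (h j x)) else 0)"
  shows "(\<Sum>j<n. adj (\<phi> (\<lambda>x. of_real (h j x)) * u j m) * (\<phi> (\<lambda>x. of_real (h j x)) * u j m'))
    = (if m = m' then 1 else 0)"
proof (rule orthonormal_columns_of_partition[where P = "\<lambda>j. \<phi> (\<lambda>x. of_real (h j x))"])
  show "\<phi> (\<lambda>x. of_real (h j x)) * z = z * \<phi> (\<lambda>x. of_real (h j x))" for j z
    using h(1) by (intro cx_central[OF cx] continuous_on_of_real)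
  show "adj (\<phi> (\<lambda>x. of_real (h j x))) = \<phi> (\<lambda>x. of_real (h j x))" for j
    by (rule cx_of_real_selfadjoint[OF cx h(1)])
  show "(\<Sum>j<n. \<phi> (\<lambda>x. of_real (h j x)) * \<phi> (\<lambda>x. of_real (h j x))) = 1"
    by (rule cx_sum_squares[OF cx h])
qed (rule orthonormal)

theorem proposition2p1:
  fixes \<phi> :: "('x::t2_space \<Rightarrow> complex) \<Rightarrow> 'a::cstar_algebra"
  assumes "compact (UNIV :: 'x set)"
    and "CX_algebra \<phi>"
    and "\<exists>S :: 'a set. countable S \<and> closure S = UNIV"
    and "\<forall>x. properly_infinite_mod (fibre_ideal \<phi> x)"
  shows "\<exists>l::nat. l > 0 \<and> mat_properly_infinite TYPE('a) l"
proof -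
  note cpt = assms(1) and cx = assms(2)
  obtain U T1 T2 where U: "\<And>x. open (U x)" "\<And>x. x \<in> U x"
    and T: "\<And>x. orthogonal_isometries_on \<phi> (U x) (T1 x) (T2 x)"
    using local_orthogonal_isometries[OF cx cpt] assms(4) by metis
  obtain n p and h :: "nat \<Rightarrow> 'x \<Rightarrow> real" where "n > 0" and h: "\<And>j. continuous_on UNIV (h j)"
    "\<And>j y. y \<notin> U (p j) \<Longrightarrow> h j y = 0" "\<And>y. (\<Sum>j<n. (h j y)\<^sup>2) = 1"
    by (rule square_partition_of_unity[OF cpt U]) blast
  have "\<phi> (\<lambda>y. of_real (h j y)) * (adj (T2 (p j) ^ m * T1 (p j)) * (T2 (p j) ^ m' * T1 (p j)))
      = (if m = m' then \<phi> (\<lambda>y. of_real (h j y)) else 0)" for j m m'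
    using h(2) by (rule orthogonal_isometries_on_words[OF cx T h(1)])
  then have "(\<Sum>j<n. adj (\<phi> (\<lambda>y. of_real (h j y)) * (T2 (p j) ^ m * T1 (p j)))
      * (\<phi> (\<lambda>y. of_real (h j y)) * (T2 (p j) ^ m' * T1 (p j)))) = (if m = m' then 1 else 0)" for m m'
    by (rule cx_orthonormal_columns[OF cx h(1,3)])
  then have "mat_properly_infinite TYPE('a) n"
    by (rule mat_properly_infinite_of_orthonormal_columns)
  with \<open>n > 0\<close> show ?thesis
    by blast
qed

end
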